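(* Let $p\ge1$ and $m\ge0$ be integers, $\nu\in[0,1/2]$, and $\delta_{p,\nu}=1+\nu/p^2$. Then $$\|T_p^{(m)}\|_{L^\infty(-\delta_{p,\nu},\delta_{p,\nu})}\le\frac{p^{2m}e^{\nu}}{\prod_{\ell=0}^{m-1}(2\ell+1)}.$$ For $x=1+\varepsilon\in[1,\delta_{p,\nu}]$ and $p\ge m+1$, $$T_p^{(m)}(x)\ge\Big(1+\frac{p^2-m^2}{2m+1}\varepsilon\Big)\prod_{\ell=0}^{m-1}\frac{p^2-\ell^2}{2\ell+1}.$$ Moreover $T_p(\delta_{p,\nu})\ge1+\nu$.
   Context: $T_p$ denotes the Chebyshev polynomial of the first kind of degree $p$ ($T_p(\cos\theta)=\cos(p\theta)$), and $T_p^{(m)}$ its $m$-th derivative; empty products equal $1$. *)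

theory Defs
  imports "HOL-Analysis.Analysis" "HOL-Computational_Algebra.Polynomial"
begin

fun cheb_T :: "nat \<Rightarrow> real poly" where
  "cheb_T 0 = 1"
| "cheb_T (Suc 0) = [:0, 1:]"
| "cheb_T (Suc (Suc n)) = [:0, 2:] * cheb_T (Suc n) - cheb_T n"

definition cheb_T_deriv :: "nat \<Rightarrow> nat \<Rightarrow> real poly" where
  "cheb_T_deriv p m = (pderiv ^^ m) (cheb_T p)"

end

theory Submission
  imports Defs
begin

text \<open>
  The polynomial T_p solves (1 - x^2) y'' - x y' + p^2 y = 0. Differentiating m times gives
  (1 - x^2) y^(m+2) - (2m+1) x y^(m+1) + (p^2 - m^2) y^(m) = 0, and at x = 1 this yields
  T_p^(m)(1) = prod_(l<m) (p^2 - l^2)/(2l+1), which is at most a_m = p^(2m) / prod_(l<m) (2l+1).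
  Since T_(n+1)' = (n+1) U_n and U_n is a nonnegative combination of the T_k, every derivative
  of T_p is a nonnegative combination of Chebyshev polynomials. Such a polynomial q satisfies
  |q| <= q(1) on [-1,1], because |T_k| <= 1 there, and q >= 0 on [1,oo), because T_k >= 1 there.
  At +-(1 + e) the bound |T_p^(m)| <= a_m exp(p^2 e) follows by downward induction on m from
  a_(m+1) <= p^2 a_m and a comparison of T_p^(m) with a_m exp(p^2 t). The lower bounds are
  tangent-line inequalities at 1, valid since T_p^(m+2) >= 0 on [1,oo).
\<close>

section \<open>Chebyshev polynomials of the second kind and the differential equation\<close>

fun cheb_U :: "nat \<Rightarrow> real poly" where
  "cheb_U 0 = 1"
| "cheb_U (Suc 0) = [:0, 2:]"
| "cheb_U (Suc (Suc n)) = [:0, 2:] * cheb_U (Suc n) - cheb_U n"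

lemma cheb_recurrence_unique:
  fixes f g :: "nat \<Rightarrow> real poly"
  assumes "f 0 = g 0" "f 1 = g 1"
    and "\<And>n. f (Suc (Suc n)) = [:0, 2:] * f (Suc n) - f n"
    and "\<And>n. g (Suc (Suc n)) = [:0, 2:] * g (Suc n) - g n"
  shows "f n = g n"
proof -
  have "f n = g n \<and> f (Suc n) = g (Suc n)"
    by (induction n) (use assms in \<open>simp_all only: One_nat_def\<close>)
  then show ?thesis ..
qed

lemma cheb_T_Suc_Suc_eq_U:
  "cheb_T (Suc (Suc n)) = [:0, 1:] * cheb_U (Suc n) - cheb_U n"
  by (rule cheb_recurrence_unique[of "\<lambda>n. cheb_T (Suc (Suc n))"])
    (auto intro!: poly_ext simp: algebra_simps)

lemma cheb_U_mult_one_minus_square: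
  "[:1, 0, -1:] * cheb_U n = cheb_T n - [:0, 1:] * cheb_T (Suc n)"
  by (rule cheb_recurrence_unique[of "\<lambda>n. [:1, 0, -1:] * cheb_U n"])
    (auto intro!: poly_ext simp: algebra_simps)

lemma cheb_U_Suc_Suc_eq_T:
  "cheb_U (Suc (Suc n)) = cheb_U n + smult 2 (cheb_T (Suc (Suc n)))"
  by (rule poly_ext) (simp only: cheb_T_Suc_Suc_eq_U cheb_U.simps; simp add: algebra_simps)

lemma pderiv_cheb_T_Suc: "pderiv (cheb_T (Suc n)) = smult (real (Suc n)) (cheb_U n)"
proof (induction n rule: cheb_U.induct)
  case (3 n)
  have "pderiv (cheb_T (Suc (Suc (Suc n)))) =
      smult 2 (cheb_T (Suc (Suc n))) + [:0, 2:] * pderiv (cheb_T (Suc (Suc n)))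
      - pderiv (cheb_T (Suc n))"
    by (simp only: cheb_T.simps pderiv_diff pderiv_mult) (simp add: pderiv_pCons)
  also have "\<dots> = smult (real (Suc (Suc (Suc n)))) (cheb_U (Suc (Suc n)))"
    using 3 by (simp only: cheb_T_Suc_Suc_eq_U cheb_U.simps)
      (auto intro!: poly_ext simp: algebra_simps)
  finally show ?case .
qed (simp_all add: pderiv_pCons pderiv_mult pderiv_diff)

lemma cheb_T_ode:
  "[:1, 0, -1:] * pderiv (pderiv (cheb_T p)) - [:0, 1:] * pderiv (cheb_T p)
     + smult ((real p)^2) (cheb_T p) = 0"
proof (cases p)
  case (Suc n)
  show ?thesis
  proof (cases n)
    case 0
    then show ?thesis using Suc by (simp add: pderiv_pCons)
  next
    case (Suc k)
    have dT: "pderiv (cheb_T p) = smult (real p) (cheb_U n)"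
      using \<open>p = Suc n\<close> pderiv_cheb_T_Suc[of n] by simp
    have dTn: "pderiv (cheb_T n) = smult (real n) (cheb_U k)"
      using \<open>n = Suc k\<close> pderiv_cheb_T_Suc[of k] by simp
    have T_U: "poly (cheb_T p) x = x * poly (cheb_U n) x - poly (cheb_U k) x" for x
      using \<open>p = Suc n\<close> \<open>n = Suc k\<close> cheb_T_Suc_Suc_eq_U[of k] by simp
    \<comment> \<open>differentiate \<open>(1 - x\<^sup>2) U\<^sub>n = T\<^sub>n - x T\<^sub>p\<close> and eliminate \<open>T\<^sub>n'\<close> and \<open>T\<^sub>p'\<close>\<close>
    have U_eq: "pderiv ([:1, 0, -1:] * cheb_U n) = pderiv (cheb_T n - [:0, 1:] * cheb_T p)"
      using \<open>p = Suc n\<close> cheb_U_mult_one_minus_square[of n] by simp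
    have dU: "(1 - x^2) * poly (pderiv (cheb_U n)) x - 2 * x * poly (cheb_U n) x
        = real n * poly (cheb_U k) x - poly (cheb_T p) x - x * (real p * poly (cheb_U n) x)" for x
      using arg_cong[OF U_eq[unfolded pderiv_mult pderiv_diff dT dTn], of "\<lambda>q. poly q x"]
      by (simp add: pderiv_pCons algebra_simps power2_eq_square)
    have p_n: "real p = real n + 1"
      using \<open>p = Suc n\<close> by simp
    show ?thesis
    proof (rule poly_ext)
      fix x
      show "poly ([:1, 0, -1:] * pderiv (pderiv (cheb_T p)) - [:0, 1:] * pderiv (cheb_T p)
          + smult ((real p)^2) (cheb_T p)) x = poly 0 x"
        using dU[of x] T_U[of x] p_n by (simp add: dT pderiv_smult power2_eq_square) algebra
    qed
  qed
qed simp

lemma cheb_T_deriv_0 [simp]: "cheb_T_deriv p 0 = cheb_T p"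
  by (simp add: cheb_T_deriv_def)

lemma cheb_T_deriv_Suc: "cheb_T_deriv p (Suc m) = pderiv (cheb_T_deriv p m)"
  by (simp add: cheb_T_deriv_def)

lemma cheb_T_deriv_ode:
  "[:1, 0, -1:] * cheb_T_deriv p (Suc (Suc m))
     - smult (2 * real m + 1) ([:0, 1:] * cheb_T_deriv p (Suc m))
     + smult ((real p)^2 - (real m)^2) (cheb_T_deriv p m) = 0"
proof (induction m)
  case 0
  then show ?case using cheb_T_ode[of p] by (simp add: cheb_T_deriv_Suc)
next
  case (Suc m)
  let ?D = "cheb_T_deriv p"
  have "poly (pderiv ([:1, 0, -1:] * ?D (Suc (Suc m))
      - smult (2 * real m + 1) ([:0, 1:] * ?D (Suc m))
      + smult ((real p)^2 - (real m)^2) (?D m))) x = 0" for x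
    using Suc.IH by simp
  then have "(1 - x^2) * poly (?D (Suc (Suc (Suc m)))) x - 2 * x * poly (?D (Suc (Suc m))) x
      - (2 * real m + 1) * (poly (?D (Suc m)) x + x * poly (?D (Suc (Suc m))) x)
      + ((real p)^2 - (real m)^2) * poly (?D (Suc m)) x = 0" for x
    unfolding pderiv_add pderiv_diff pderiv_mult pderiv_smult cheb_T_deriv_Suc[symmetric]
    by (simp add: pderiv_pCons algebra_simps power2_eq_square)
  then show ?case
    by (intro poly_ext) (simp add: algebra_simps power2_eq_square)
qed

lemma poly_cheb_T_one: "poly (cheb_T k) 1 = 1"
  by (induction k rule: cheb_T.induct) auto

lemma poly_cheb_T_deriv_one:
  "poly (cheb_T_deriv p m) 1 = (\<Prod>l<m. ((real p)^2 - (real l)^2) / (2 * real l + 1))"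
proof (induction m)
  case (Suc m)
  have "(2 * real m + 1) * poly (cheb_T_deriv p (Suc m)) 1
      = ((real p)^2 - (real m)^2) * poly (cheb_T_deriv p m) 1"
    using arg_cong[OF cheb_T_deriv_ode[of p m], of "\<lambda>q. poly q 1"] by simp
  then show ?case
    using Suc.IH by (simp add: field_simps)
qed (simp add: poly_cheb_T_one)

section \<open>Nonnegative combinations of Chebyshev polynomials\<close>

inductive cheb_nonneg_comb :: "real poly \<Rightarrow> bool" where
  zero: "cheb_nonneg_comb 0"
| add_cheb_T: "cheb_nonneg_comb q \<Longrightarrow> c \<ge> 0 \<Longrightarrow> cheb_nonneg_comb (q + smult c (cheb_T k))"

lemma cheb_nonneg_comb_add:
  "cheb_nonneg_comb b \<Longrightarrow> cheb_nonneg_comb a \<Longrightarrow> cheb_nonneg_comb (a + b)"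
proof (induction b rule: cheb_nonneg_comb.induct)
  case (add_cheb_T q c k)
  then have "cheb_nonneg_comb ((a + q) + smult c (cheb_T k))"
    by (intro cheb_nonneg_comb.add_cheb_T) auto
  then show ?case by (simp add: add.assoc)
qed simp

lemma cheb_nonneg_comb_smult:
  "cheb_nonneg_comb a \<Longrightarrow> c \<ge> 0 \<Longrightarrow> cheb_nonneg_comb (smult c a)"
proof (induction a rule: cheb_nonneg_comb.induct)
  case (add_cheb_T q d k)
  then have "cheb_nonneg_comb (smult c q + smult (c * d) (cheb_T k))"
    by (intro cheb_nonneg_comb.add_cheb_T) auto
  then show ?case by (simp add: smult_add_right)
qed (simp add: cheb_nonneg_comb.zero)

lemma cheb_nonneg_comb_cheb_T: "cheb_nonneg_comb (cheb_T k)"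
  using cheb_nonneg_comb.add_cheb_T[OF cheb_nonneg_comb.zero, of 1 k] by simp

lemma cheb_nonneg_comb_cheb_U: "cheb_nonneg_comb (cheb_U n)"
proof (induction n rule: cheb_U.induct)
  case 1
  show ?case using cheb_nonneg_comb_cheb_T[of 0] by simp
next
  case 2
  have "cheb_nonneg_comb (smult 2 (cheb_T 1))"
    by (simp add: cheb_nonneg_comb_smult cheb_nonneg_comb_cheb_T del: cheb_T.simps)
  then show ?case by simp
next
  case (3 n)
  then show ?case
    by (simp add: cheb_U_Suc_Suc_eq_T cheb_nonneg_comb_add cheb_nonneg_comb_smult
        cheb_nonneg_comb_cheb_T del: cheb_U.simps cheb_T.simps)
qed

lemma cheb_nonneg_comb_pderiv: "cheb_nonneg_comb q \<Longrightarrow> cheb_nonneg_comb (pderiv q)"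
proof (induction q rule: cheb_nonneg_comb.induct)
  case (add_cheb_T q c k)
  have "cheb_nonneg_comb (pderiv (cheb_T k))"
    by (cases k) (simp_all add: pderiv_cheb_T_Suc cheb_nonneg_comb_smult cheb_nonneg_comb_cheb_U
        cheb_nonneg_comb.zero)
  then show ?case
    using add_cheb_T by (simp add: pderiv_add pderiv_smult cheb_nonneg_comb_add cheb_nonneg_comb_smult)
qed (simp add: cheb_nonneg_comb.zero)

lemma cheb_nonneg_comb_cheb_T_deriv: "cheb_nonneg_comb (cheb_T_deriv p m)"
  by (induction m) (simp_all add: cheb_T_deriv_Suc cheb_nonneg_comb_cheb_T cheb_nonneg_comb_pderiv)

lemma poly_cheb_T_cos: "poly (cheb_T k) (cos t) = cos (real k * t)"
proof (induction k rule: cheb_T.induct)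
  case (3 k)
  have "cos (real (Suc (Suc k)) * t) + cos (real k * t) = 2 * cos t * cos (real (Suc k) * t)"
    using cos_add[of "real (Suc k) * t" t] cos_diff[of "real (Suc k) * t" t]
    by (simp add: algebra_simps)
  then show ?case
    using 3 by (simp add: algebra_simps)
qed simp_all

lemma abs_poly_cheb_T_le_one: "\<bar>x\<bar> \<le> 1 \<Longrightarrow> \<bar>poly (cheb_T k) x\<bar> \<le> 1"
  using poly_cheb_T_cos[of k "arccos x"] by (simp add: cos_arccos_abs)

lemma poly_cheb_T_ge_one:
  assumes "x \<ge> 1"
  shows "1 \<le> poly (cheb_T k) x"
proof -
  have "1 \<le> poly (cheb_T k) x \<and> poly (cheb_T k) x \<le> poly (cheb_T (Suc k)) x"
  proof (induction k)
    case (Suc k)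
    have "1 * (2 * poly (cheb_T (Suc k)) x) \<le> x * (2 * poly (cheb_T (Suc k)) x)"
      using Suc.IH assms by (intro mult_right_mono) auto
    then have "poly (cheb_T (Suc k)) x \<le> x * (2 * poly (cheb_T (Suc k)) x) - poly (cheb_T k) x"
      using Suc.IH by linarith
    then show ?case using Suc.IH by simp
  qed (use assms in simp)
  then show ?thesis ..
qed

lemma cheb_nonneg_comb_abs_poly_le:
  "cheb_nonneg_comb q \<Longrightarrow> \<bar>x\<bar> \<le> 1 \<Longrightarrow> \<bar>poly q x\<bar> \<le> poly q 1"
proof (induction q rule: cheb_nonneg_comb.induct)
  case (add_cheb_T q c k)
  have "\<bar>poly q x + c * poly (cheb_T k) x\<bar> \<le> \<bar>poly q x\<bar> + c * \<bar>poly (cheb_T k) x\<bar>"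
    using abs_triangle_ineq[of "poly q x" "c * poly (cheb_T k) x"] add_cheb_T.hyps
    by (simp add: abs_mult)
  also have "\<dots> \<le> poly q 1 + c * 1"
    using add_cheb_T abs_poly_cheb_T_le_one[of x k] by (intro add_mono mult_left_mono) auto
  finally show ?case by (simp add: poly_cheb_T_one)
qed simp

lemma cheb_nonneg_comb_poly_nonneg:
  "cheb_nonneg_comb q \<Longrightarrow> x \<ge> 1 \<Longrightarrow> poly q x \<ge> 0"
  by (induction q rule: cheb_nonneg_comb.induct)
    (auto intro!: add_nonneg_nonneg mult_nonneg_nonneg order.trans[OF _ poly_cheb_T_ge_one])

section \<open>Bounds for the derivatives of Chebyshev polynomials\<close>

lemma degree_cheb_T_le: "degree (cheb_T n) \<le> n"
  by (induction n rule: cheb_T.induct)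
    (auto intro!: degree_diff_le order.trans[OF degree_mult_le])

lemma cheb_T_deriv_eq_0: "p < j \<Longrightarrow> cheb_T_deriv p j = 0"
proof -
  have degree: "degree (cheb_T_deriv p i) \<le> p - i" for i
    by (induction i) (use degree_cheb_T_le in \<open>auto simp: cheb_T_deriv_Suc degree_pderiv\<close>)
  assume "p < j"
  then obtain i where "j = Suc i" "p \<le> i"
    by (cases j) auto
  then show ?thesis
    using degree[of i] by (simp add: cheb_T_deriv_Suc pderiv_eq_0_iff)
qed

definition cheb_deriv_majorant :: "nat \<Rightarrow> nat \<Rightarrow> real" where
  "cheb_deriv_majorant p j = (real p)^(2 * j) / (\<Prod>l<j. 2 * real l + 1)"

lemma cheb_deriv_majorant_nonneg: "0 \<le> cheb_deriv_majorant p j"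
  unfolding cheb_deriv_majorant_def by (simp add: prod_nonneg)

lemma cheb_deriv_majorant_Suc_le:
  "cheb_deriv_majorant p (Suc j) \<le> (real p)^2 * cheb_deriv_majorant p j"
proof -
  have "cheb_deriv_majorant p (Suc j) = (real p)^2 * cheb_deriv_majorant p j / (2 * real j + 1)"
    unfolding cheb_deriv_majorant_def by (simp add: power_mult field_simps power2_eq_square)
  also have "\<dots> \<le> (real p)^2 * cheb_deriv_majorant p j"
    using mult_nonneg_nonneg[OF zero_le_power2 cheb_deriv_majorant_nonneg, of "real p" p j]
    by (simp add: divide_le_eq mult_le_cancel_left1)
  finally show ?thesis .
qed

lemma poly_cheb_T_deriv_one_le: "poly (cheb_T_deriv p j) 1 \<le> cheb_deriv_majorant p j"
proof (cases "j \<le> p")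
  case True
  have factor: "0 \<le> ((real p)^2 - (real l)^2) / (2 * real l + 1) \<and>
      ((real p)^2 - (real l)^2) / (2 * real l + 1) \<le> (real p)^2 / (2 * real l + 1)"
    if "l < j" for l
    using that True by (auto intro!: divide_right_mono power_mono)
  have "(\<Prod>l<j. ((real p)^2 - (real l)^2) / (2 * real l + 1))
      \<le> (\<Prod>l<j. (real p)^2 / (2 * real l + 1))"
    by (rule prod_mono) (simp add: factor)
  then show ?thesis
    by (simp add: poly_cheb_T_deriv_one cheb_deriv_majorant_def prod_dividef power_mult)
qed (simp add: cheb_T_deriv_eq_0 cheb_deriv_majorant_nonneg)

lemma abs_le_exp_growth:
  fixes f f' :: "real \<Rightarrow> real"
  assumes deriv: "\<And>t. 0 \<le> t \<Longrightarrow> (f has_real_derivative f' t) (at t)"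
    and start: "\<bar>f 0\<bar> \<le> c"
    and slope: "\<And>t. 0 \<le> t \<Longrightarrow> \<bar>f' t\<bar> \<le> K * c * exp (K * t)"
    and "0 \<le> \<epsilon>"
  shows "\<bar>f \<epsilon>\<bar> \<le> c * exp (K * \<epsilon>)"
proof -
  have "\<sigma> * f \<epsilon> \<le> c * exp (K * \<epsilon>)" if \<sigma>: "\<bar>\<sigma>\<bar> = 1" for \<sigma>
  proof -
    let ?g = "\<lambda>t. c * exp (K * t) - \<sigma> * f t"
    have "?g 0 \<le> ?g \<epsilon>"
    proof (rule deriv_nonneg_imp_mono[where g = ?g and g' = "\<lambda>t. c * (exp (K * t) * K) - \<sigma> * f' t"])
      fix t assume "t \<in> {0..\<epsilon>}"
      then have "0 \<le> t" by simp
      show "(?g has_real_derivative c * (exp (K * t) * K) - \<sigma> * f' t) (at t)"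
        using deriv[OF \<open>0 \<le> t\<close>] by (auto intro!: derivative_eq_intros)
      have "\<sigma> * f' t \<le> \<bar>f' t\<bar>"
        using abs_ge_self[of "\<sigma> * f' t"] \<sigma> by (simp add: abs_mult)
      then show "0 \<le> c * (exp (K * t) * K) - \<sigma> * f' t"
        using slope[OF \<open>0 \<le> t\<close>] by (simp add: algebra_simps)
    qed (use \<open>0 \<le> \<epsilon>\<close> in simp)
    moreover have "\<sigma> * f 0 \<le> c"
      using abs_ge_self[of "\<sigma> * f 0"] start \<sigma> by (simp add: abs_mult)
    ultimately show ?thesis by simp
  qed
  from this[of 1] this[of "-1"] show ?thesis by (simp add: abs_le_iff)
qed

lemma abs_poly_cheb_T_deriv_le_exp_at_sign:
  assumes s: "\<bar>s\<bar> = 1" and "0 \<le> \<epsilon>"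
  shows "\<bar>poly (cheb_T_deriv p j) (s * (1 + \<epsilon>))\<bar>
    \<le> cheb_deriv_majorant p j * exp ((real p)^2 * \<epsilon>)"
proof -
  \<comment> \<open>downward induction on j, starting above the degree p\<close>
  let ?bound = "\<lambda>j. \<forall>\<epsilon>\<ge>0. \<bar>poly (cheb_T_deriv p j) (s * (1 + \<epsilon>))\<bar>
    \<le> cheb_deriv_majorant p j * exp ((real p)^2 * \<epsilon>)"
  have vanishing: "?bound j" if "p < j" for j
    using that by (simp add: cheb_T_deriv_eq_0 cheb_deriv_majorant_nonneg)
  have descend: "?bound j" if IH: "?bound (Suc j)" for j
  proof (intro allI impI)
    fix \<epsilon> :: real assume "0 \<le> \<epsilon>"
    show "\<bar>poly (cheb_T_deriv p j) (s * (1 + \<epsilon>))\<bar>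
      \<le> cheb_deriv_majorant p j * exp ((real p)^2 * \<epsilon>)"
    proof (rule abs_le_exp_growth[where f' = "\<lambda>t. s * poly (cheb_T_deriv p (Suc j)) (s * (1 + t))"])
      show "((\<lambda>t. poly (cheb_T_deriv p j) (s * (1 + t))) has_real_derivative
          s * poly (cheb_T_deriv p (Suc j)) (s * (1 + t))) (at t)" for t
        by (auto intro!: derivative_eq_intros simp: cheb_T_deriv_Suc)
      have "\<bar>poly (cheb_T_deriv p j) s\<bar> \<le> poly (cheb_T_deriv p j) 1"
        using s by (intro cheb_nonneg_comb_abs_poly_le cheb_nonneg_comb_cheb_T_deriv) simp
      then show "\<bar>poly (cheb_T_deriv p j) (s * (1 + 0))\<bar> \<le> cheb_deriv_majorant p j"
        using poly_cheb_T_deriv_one_le[of p j] by simp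
      show "\<bar>s * poly (cheb_T_deriv p (Suc j)) (s * (1 + t))\<bar>
          \<le> (real p)^2 * cheb_deriv_majorant p j * exp ((real p)^2 * t)" if "0 \<le> t" for t
      proof -
        have "\<bar>s * poly (cheb_T_deriv p (Suc j)) (s * (1 + t))\<bar>
            \<le> cheb_deriv_majorant p (Suc j) * exp ((real p)^2 * t)"
          using IH that s by (simp add: abs_mult)
        also have "\<dots> \<le> (real p)^2 * cheb_deriv_majorant p j * exp ((real p)^2 * t)"
          by (intro mult_right_mono cheb_deriv_majorant_Suc_le) simp
        finally show ?thesis .
      qed
    qed (use \<open>0 \<le> \<epsilon>\<close> in simp)
  qed
  have "?bound j"
  proof (cases "p < j")
    case False
    then have "j \<le> Suc p" by simp
    then show ?thesis
    proof (induction rule: inc_induct)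
      case base
      show ?case by (rule vanishing) simp
    next
      case (step n)
      show ?case by (rule descend[OF step(3)])
    qed
  qed (rule vanishing)
  then show ?thesis using \<open>0 \<le> \<epsilon>\<close> by blast
qed

lemma abs_poly_cheb_T_deriv_le_exp:
  assumes "\<bar>x\<bar> \<le> 1 + \<epsilon>" and "0 \<le> \<epsilon>"
  shows "\<bar>poly (cheb_T_deriv p j) x\<bar> \<le> cheb_deriv_majorant p j * exp ((real p)^2 * \<epsilon>)"
proof (cases "\<bar>x\<bar> \<le> 1")
  case True
  have "\<bar>poly (cheb_T_deriv p j) x\<bar> \<le> poly (cheb_T_deriv p j) 1"
    using True by (intro cheb_nonneg_comb_abs_poly_le cheb_nonneg_comb_cheb_T_deriv)
  also have "\<dots> \<le> cheb_deriv_majorant p j"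
    by (rule poly_cheb_T_deriv_one_le)
  also have "\<dots> \<le> cheb_deriv_majorant p j * exp ((real p)^2 * \<epsilon>)"
    using \<open>0 \<le> \<epsilon>\<close> mult_left_mono[of 1 "exp ((real p)^2 * \<epsilon>)", OF _ cheb_deriv_majorant_nonneg]
    by simp
  finally show ?thesis .
next
  case False
  have "x = sgn x * (1 + (\<bar>x\<bar> - 1))"
    by (simp add: sgn_mult_abs)
  then have "\<bar>poly (cheb_T_deriv p j) x\<bar>
      \<le> cheb_deriv_majorant p j * exp ((real p)^2 * (\<bar>x\<bar> - 1))"
    using False abs_poly_cheb_T_deriv_le_exp_at_sign[of "sgn x" "\<bar>x\<bar> - 1" p j]
    by (simp add: abs_sgn_eq)
  also have "\<dots> \<le> cheb_deriv_majorant p j * exp ((real p)^2 * \<epsilon>)"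
    using assms by (intro mult_left_mono cheb_deriv_majorant_nonneg) (simp_all add: mult_left_mono)
  finally show ?thesis .
qed

lemma poly_ge_tangent:
  fixes q :: "real poly"
  assumes convex: "\<And>x. a \<le> x \<Longrightarrow> 0 \<le> poly (pderiv (pderiv q)) x" and "0 \<le> \<epsilon>"
  shows "poly q a + \<epsilon> * poly (pderiv q) a \<le> poly q (a + \<epsilon>)"
proof -
  let ?g = "\<lambda>t. poly q (a + t) - t * poly (pderiv q) a"
  have "?g 0 \<le> ?g \<epsilon>"
  proof (rule deriv_nonneg_imp_mono[where g = ?g
        and g' = "\<lambda>t. poly (pderiv q) (a + t) - poly (pderiv q) a"])
    fix t assume t: "t \<in> {0..\<epsilon>}"
    show "(?g has_real_derivative poly (pderiv q) (a + t) - poly (pderiv q) a) (at t)"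
      by (auto intro!: derivative_eq_intros)
    have "poly (pderiv q) a \<le> poly (pderiv q) (a + t)"
      by (rule deriv_nonneg_imp_mono[where g' = "poly (pderiv (pderiv q))"])
        (use convex t in auto)
    then show "0 \<le> poly (pderiv q) (a + t) - poly (pderiv q) a"
      by simp
  qed (use \<open>0 \<le> \<epsilon>\<close> in simp)
  then show ?thesis by simp
qed

lemma poly_cheb_T_deriv_ge_tangent:
  "0 \<le> \<epsilon> \<Longrightarrow> poly (cheb_T_deriv p m) 1 + \<epsilon> * poly (cheb_T_deriv p (Suc m)) 1
    \<le> poly (cheb_T_deriv p m) (1 + \<epsilon>)"
  using poly_ge_tangent[of 1 "cheb_T_deriv p m" \<epsilon>]
    cheb_nonneg_comb_poly_nonneg[OF cheb_nonneg_comb_cheb_T_deriv, of _ p "Suc (Suc m)"]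
  by (simp add: cheb_T_deriv_Suc)

theorem lemmaA1:
  fixes p m :: nat and \<nu> :: real
  assumes "p \<ge> 1" and "0 \<le> \<nu>" and "\<nu> \<le> 1/2"
  defines "\<delta> \<equiv> 1 + \<nu> / (real p)^2"
  shows "(\<forall>x::real. -\<delta> < x \<and> x < \<delta> \<longrightarrow>
            \<bar>poly (cheb_T_deriv p m) x\<bar>
              \<le> (real p)^(2*m) * exp \<nu> / (\<Prod>l<m. (2 * real l + 1)))
    \<and> (\<forall>\<epsilon>::real. 0 \<le> \<epsilon> \<and> 1 + \<epsilon> \<le> \<delta> \<and> p \<ge> m + 1 \<longrightarrow>
            poly (cheb_T_deriv p m) (1 + \<epsilon>)
              \<ge> (1 + ((real p)^2 - (real m)^2) / (2 * real m + 1) * \<epsilon>)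
                 * (\<Prod>l<m. ((real p)^2 - (real l)^2) / (2 * real l + 1)))
    \<and> poly (cheb_T p) \<delta> \<ge> 1 + \<nu>"
proof (intro conjI allI impI)
  have p: "(real p)^2 > 0"
    using \<open>p \<ge> 1\<close> by simp
  fix x :: real
  assume "-\<delta> < x \<and> x < \<delta>"
  then have "\<bar>poly (cheb_T_deriv p m) x\<bar>
      \<le> cheb_deriv_majorant p m * exp ((real p)^2 * (\<nu> / (real p)^2))"
    using \<open>0 \<le> \<nu>\<close> by (intro abs_poly_cheb_T_deriv_le_exp) (auto simp: \<delta>_def)
  then show "\<bar>poly (cheb_T_deriv p m) x\<bar>
      \<le> (real p)^(2*m) * exp \<nu> / (\<Prod>l<m. (2 * real l + 1))"
    using p by (simp add: cheb_deriv_majorant_def)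
next
  fix \<epsilon> :: real
  assume "0 \<le> \<epsilon> \<and> 1 + \<epsilon> \<le> \<delta> \<and> p \<ge> m + 1"
  then show "poly (cheb_T_deriv p m) (1 + \<epsilon>)
      \<ge> (1 + ((real p)^2 - (real m)^2) / (2 * real m + 1) * \<epsilon>)
         * (\<Prod>l<m. ((real p)^2 - (real l)^2) / (2 * real l + 1))"
    using poly_cheb_T_deriv_ge_tangent[of \<epsilon> p m]
    by (simp add: poly_cheb_T_deriv_one algebra_simps)
next
  show "poly (cheb_T p) \<delta> \<ge> 1 + \<nu>"
    using poly_cheb_T_deriv_ge_tangent[of "\<nu> / (real p)^2" p 0] \<open>0 \<le> \<nu>\<close> \<open>p \<ge> 1\<close>
    by (simp add: \<delta>_def poly_cheb_T_deriv_one poly_cheb_T_one)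
qed

end
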